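(* There are constants $C_0,r>0$ such that for $k>\sqrt n$ the following holds with probability at least $1-e^{-n^r}$ over $G'\sim G(n,\tfrac12)$: for every set $K$ of $k$ vertices, if $G$ is obtained from $G'$ by adding all missing edges inside $K$, then every maximum clique $K'$ of $G$ satisfies $|K'\cap K|\ge k-C_0\log n$ and $|K'\setminus K|\le C_0\log n$.
   Context: $G(n,p)$ denotes the Erdős–Rényi random graph on $n$ vertices with edge probability $p$. Logarithms are base $2$. (This is the statement that, for $G\sim AG(n,\tfrac12,k)$ with $k>\sqrt n$, with extremely high probability—probability of the form $1-e^{-n^r}$—simultaneously for all adversarial choices, the maximum clique contains all but $O(\log n)$ vertices of the planted clique and at most $O(\log n)$ other vertices.) *)

theory Defs
  imports "HOL-Probability.Probability"
begin

text \<open>Simple graphs on vertex set {0..<n}, given by their edge sets (2-element sets).\<close>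

definition all_edges :: "nat \<Rightarrow> nat set set" where
  "all_edges n = {{u, v} | u v. u < n \<and> v < n \<and> u \<noteq> v}"

definition gnp_half :: "nat \<Rightarrow> nat set set pmf" where
  "gnp_half n = pmf_of_set (Pow (all_edges n))"

definition clique_edges :: "nat set \<Rightarrow> nat set set" where
  "clique_edges K = {{u, v} | u v. u \<in> K \<and> v \<in> K \<and> u \<noteq> v}"

definition is_clique :: "nat set set \<Rightarrow> nat set \<Rightarrow> bool" where
  "is_clique E S \<longleftrightarrow> (\<forall>u\<in>S. \<forall>v\<in>S. u \<noteq> v \<longrightarrow> {u, v} \<in> E)"

definition is_max_clique :: "nat \<Rightarrow> nat set set \<Rightarrow> nat set \<Rightarrow> bool" where
  "is_max_clique n E S \<longleftrightarrow> S \<subseteq> {..<n} \<and> is_clique E S \<and>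
     (\<forall>T. T \<subseteq> {..<n} \<longrightarrow> is_clique E T \<longrightarrow> card T \<le> card S)"

end

theory Submission
  imports Defs "HOL-Real_Asymp.Real_Asymp"
begin

text \<open>Let K' be a maximum clique of the planted graph, so |K'| \<ge> |K| = k. If m vertices of K' lie
outside K, each of them is joined in G(n,1/2) itself to the at least k - m other vertices of K';
so G(n,1/2) contains a complete bipartite graph with sides of sizes m and a for every a \<le> k - m.
A union bound over the at most n^(m+a) positions of such a graph bounds the probability of this by
n^(m+a) 2^(-am), which for m \<approx> 3 log n and a \<approx> sqrt n - 3 log n is below exp(-n^(1/4)).
Outside this event |K' - K| < m and |K' \<inter> K| \<ge> |K'| - m \<ge> k - m. For the finitely many small n,
C0 is taken so large that C0 log n \<ge> n and the bounds hold trivially.\<close>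

definition biclique_edges :: "nat set \<Rightarrow> nat set \<Rightarrow> nat set set" where
  "biclique_edges B C = {{u, v} | u v. u \<in> B \<and> v \<in> C}"

definition has_biclique :: "nat \<Rightarrow> nat set set \<Rightarrow> nat \<Rightarrow> nat \<Rightarrow> bool" where
  "has_biclique n E m a \<longleftrightarrow> (\<exists>B C. B \<subseteq> {..<n} \<and> C \<subseteq> {..<n} \<and> B \<inter> C = {} \<and>
     card B = m \<and> card C = a \<and> biclique_edges B C \<subseteq> E)"

definition planted_clique_recovered :: "nat \<Rightarrow> nat \<Rightarrow> real \<Rightarrow> nat set set \<Rightarrow> bool" where
  "planted_clique_recovered n k d E \<longleftrightarrow> (\<forall>K. K \<subseteq> {..<n} \<and> card K = k \<longrightarrow>
     (\<forall>K'. is_max_clique n (E \<union> clique_edges K) K' \<longrightarrow>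
        real (card (K' \<inter> K)) \<ge> real k - d \<and> real (card (K' - K)) \<le> d))"

lemma is_clique_planted: "is_clique (E \<union> clique_edges K) K"
  unfolding is_clique_def clique_edges_def by blast

lemma card_planted_le_max_clique:
  assumes "K \<subseteq> {..<n}" "is_max_clique n (E \<union> clique_edges K) K'"
  shows "card K \<le> card K'"
  using assms is_clique_planted unfolding is_max_clique_def by blast

lemma max_clique_edge_outside_planted:
  assumes "is_max_clique n (E \<union> clique_edges K) K'" "u \<in> K' - K" "v \<in> K'" "u \<noteq> v"
  shows "{u, v} \<in> E"
proof -
  have "{u, v} \<in> E \<union> clique_edges K"
    using assms unfolding is_max_clique_def is_clique_def by blast
  moreover have "{u, v} \<notin> clique_edges K"
    using assms(2) by (auto simp: clique_edges_def doubleton_eq_iff)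
  ultimately show ?thesis by blast
qed

lemma has_biclique_if_max_clique_leaves_planted:
  assumes max: "is_max_clique n (E \<union> clique_edges K) K'"
    and K: "K \<subseteq> {..<n}" "card K = k" and "m \<le> card (K' - K)" "a + m \<le> k"
  shows "has_biclique n E m a"
proof -
  have "K' \<subseteq> {..<n}" using max unfolding is_max_clique_def by blast
  then have "finite K'" by (rule finite_subset) simp
  obtain B where B: "B \<subseteq> K' - K" "card B = m"
    using obtain_subset_with_card_n[OF \<open>m \<le> card (K' - K)\<close>] by blast
  have "k \<le> card K'" using card_planted_le_max_clique[OF K(1) max] K(2) by simp
  moreover have "card (K' - B) = card K' - m"
    using B \<open>finite K'\<close> by (metis Diff_subset card_Diff_subset finite_subset subset_trans)
  ultimately have "a \<le> card (K' - B)" using \<open>a + m \<le> k\<close> by linarith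
  then obtain C where C: "C \<subseteq> K' - B" "card C = a"
    using obtain_subset_with_card_n by blast
  have "biclique_edges B C \<subseteq> E"
    using B C max_clique_edge_outside_planted[OF max] by (fastforce simp: biclique_edges_def)
  then show ?thesis
    unfolding has_biclique_def using B C \<open>K' \<subseteq> {..<n}\<close> by (intro exI[of _ B] exI[of _ C]) auto
qed

lemma planted_clique_recovered_if_no_biclique:
  assumes "\<not> has_biclique n E m a" "a + m \<le> k" "real m \<le> d"
  shows "planted_clique_recovered n k d E"
  unfolding planted_clique_recovered_def
proof (intro allI impI, elim conjE)
  fix K K' assume K: "K \<subseteq> {..<n}" "card K = k" and max: "is_max_clique n (E \<union> clique_edges K) K'"
  have "card (K' - K) < m"
    using has_biclique_if_max_clique_leaves_planted[OF max K _ \<open>a + m \<le> k\<close>] assms(1)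
    by (meson not_le)
  moreover have "card K' = card (K' \<inter> K) + card (K' - K)"
    using max unfolding is_max_clique_def by (metis card_Int_Diff finite_nat_iff_bounded)
  moreover have "k \<le> card K'" using card_planted_le_max_clique[OF K(1) max] K(2) by simp
  ultimately show "real k - d \<le> real (card (K' \<inter> K)) \<and> real (card (K' - K)) \<le> d"
    using \<open>real m \<le> d\<close> by linarith
qed

lemma planted_clique_recovered_trivial:
  assumes "n < k \<or> real n \<le> d"
  shows "planted_clique_recovered n k d E"
  unfolding planted_clique_recovered_def
proof (intro allI impI, elim conjE)
  fix K K' assume K: "K \<subseteq> {..<n}" "card K = k" and max: "is_max_clique n (E \<union> clique_edges K) K'"
  have "k \<le> n" using card_mono[OF _ K(1)] K(2) by simp
  moreover have "card (K' - K) \<le> n"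
    using max card_mono[of "{..<n}" "K' - K"] unfolding is_max_clique_def by auto
  ultimately show "real k - d \<le> real (card (K' \<inter> K)) \<and> real (card (K' - K)) \<le> d"
    using assms by linarith
qed

lemma prob_superset_pmf_of_Pow:
  assumes "finite U" "F \<subseteq> U"
  shows "measure_pmf.prob (pmf_of_set (Pow U)) {E. F \<subseteq> E} = 1 / 2 ^ card F"
proof -
  have "Pow U \<inter> {E. F \<subseteq> E} = (\<lambda>X. X \<union> F) ` Pow (U - F)"
    using assms(2) by (auto intro!: image_eqI[where x = "E - F" for E])
  moreover have "inj_on (\<lambda>X. X \<union> F) (Pow (U - F))" by (auto simp: inj_on_def)
  ultimately have card_supersets: "card (Pow U \<inter> {E. F \<subseteq> E}) = 2 ^ (card U - card F)"
    using assms by (simp add: card_image card_Pow card_Diff_subset finite_subset)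
  have "card F \<le> card U" using assms by (rule card_mono)
  have "measure_pmf.prob (pmf_of_set (Pow U)) {E. F \<subseteq> E}
      = real (card (Pow U \<inter> {E. F \<subseteq> E})) / real (card (Pow U))"
    using assms(1) by (intro measure_pmf_of_set) auto
  also have "\<dots> = 2 ^ (card U - card F) / 2 ^ card U"
    using assms(1) by (simp add: card_supersets card_Pow)
  also have "\<dots> = 1 / 2 ^ card F"
    using \<open>card F \<le> card U\<close> by (simp add: power_diff)
  finally show ?thesis .
qed

lemma card_biclique_edges:
  assumes "B \<inter> C = {}" "finite B" "finite C"
  shows "card (biclique_edges B C) = card B * card C"
proof -
  have "biclique_edges B C = (\<lambda>(u, v). {u, v}) ` (B \<times> C)"
    unfolding biclique_edges_def by auto
  moreover have "inj_on (\<lambda>(u, v). {u, v}) (B \<times> C)"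
    using assms(1) by (auto simp: inj_on_def doubleton_eq_iff)
  ultimately show ?thesis by (simp add: card_image card_cartesian_product)
qed

lemma binomial_le_power: "n choose k \<le> n ^ k"
  by (cases "k \<le> n") (auto simp: binomial_le_pow binomial_eq_0)

lemma prob_has_biclique_le:
  "measure_pmf.prob (gnp_half n) {E. has_biclique n E m a} \<le> real n ^ (m + a) / 2 ^ (a * m)"
proof -
  define I where
    "I = {(B, C). B \<subseteq> {..<n} \<and> C \<subseteq> {..<n} \<and> B \<inter> C = {} \<and> card B = m \<and> card C = a}"
  have "finite I"
    by (rule finite_subset[of _ "Pow {..<n} \<times> Pow {..<n}"]) (auto simp: I_def)
  have "card I \<le> card ({B. B \<subseteq> {..<n} \<and> card B = m} \<times> {C. C \<subseteq> {..<n} \<and> card C = a})"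
    by (rule card_mono) (auto simp: I_def)
  also have "\<dots> \<le> n ^ m * n ^ a"
    by (simp add: card_cartesian_product n_subsets mult_le_mono binomial_le_power)
  finally have "card I \<le> n ^ (m + a)" by (simp add: power_add)
  then have card_I: "real (card I) \<le> real n ^ (m + a)"
    by (metis of_nat_le_iff of_nat_power)
  have prob_edges: "measure_pmf.prob (gnp_half n) {E. biclique_edges B C \<subseteq> E} = 1 / 2 ^ (a * m)"
    if "(B, C) \<in> I" for B C
  proof -
    have "finite B" "finite C" using that finite_subset by (auto simp: I_def)
    moreover have "biclique_edges B C \<subseteq> all_edges n"
      using that by (fastforce simp: I_def biclique_edges_def all_edges_def subset_iff)
    moreover have "finite (all_edges n)"
      by (rule finite_subset[of _ "Pow {..<n}"]) (auto simp: all_edges_def)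
    ultimately show ?thesis
      using that unfolding gnp_half_def
      by (simp add: prob_superset_pmf_of_Pow card_biclique_edges I_def mult.commute)
  qed
  have "{E. has_biclique n E m a} = (\<Union>(B, C)\<in>I. {E. biclique_edges B C \<subseteq> E})"
    by (auto simp: has_biclique_def I_def)
  then have "measure_pmf.prob (gnp_half n) {E. has_biclique n E m a}
      \<le> (\<Sum>(B, C)\<in>I. measure_pmf.prob (gnp_half n) {E. biclique_edges B C \<subseteq> E})"
    using measure_pmf.finite_measure_subadditive_finite[OF \<open>finite I\<close>] by (simp add: case_prod_unfold)
  also have "\<dots> = real (card I) / 2 ^ (a * m)"
    using prob_edges by (simp add: case_prod_unfold)
  also have "\<dots> \<le> real n ^ (m + a) / 2 ^ (a * m)"
    using card_I by (simp add: divide_right_mono)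
  finally show ?thesis .
qed

lemma biclique_union_bound_le_exp:
  fixes n m a :: nat
  defines "L \<equiv> log 2 (real n)"
  assumes "n \<ge> 2" "3 * L \<le> real m" "real m \<le> 3 * L + 1" "sqrt n - 3 * L - 2 \<le> real a"
    and "L * (9 * L + 5 - 2 * sqrt n) \<le> -2 * n powr (1/4)"
  shows "real n ^ (m + a) / 2 ^ (a * m) \<le> exp (- (n powr (1/4)))"
proof -
  have "L \<ge> 1" using \<open>n \<ge> 2\<close> by (simp add: L_def)
  have "a * (2 * L) \<le> a * (m - L)" using assms(3) by (intro mult_left_mono) auto
  moreover have "m * L \<le> (3 * L + 1) * L" using assms(4) \<open>L \<ge> 1\<close> by (intro mult_right_mono) auto
  moreover have "2 * L * (sqrt n - 3 * L - 2) \<le> 2 * L * a"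
    using assms(5) \<open>L \<ge> 1\<close> by (intro mult_left_mono) auto
  ultimately have exponent: "(m + a) * L - a * m \<le> -2 * n powr (1/4)"
    using assms(6) by (simp add: algebra_simps)
  have "real n = 2 powr L" using \<open>n \<ge> 2\<close> by (simp add: L_def)
  then have "real n ^ (m + a) / 2 ^ (a * m) = (2 powr L) powr real (m + a) / 2 powr real (a * m)"
    using \<open>n \<ge> 2\<close> by (subst (1 2) powr_realpow) auto
  also have "\<dots> = 2 powr ((m + a) * L - a * m)"
    by (simp add: powr_diff powr_powr mult.commute)
  also have "\<dots> \<le> 2 powr (-2 * n powr (1/4))"
    using exponent by (intro powr_mono) auto
  also have "\<dots> = exp (- (2 * ln 2 * n powr (1/4)))"
    by (simp add: powr_def)
  also have "\<dots> \<le> exp (- (n powr (1/4)))"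
    using ln2_ge_two_thirds by (intro exp_mono le_imp_neg_le) (simp add: mult_le_cancel_right1)
  finally show ?thesis .
qed

lemma prob_planted_clique_recovered_ge:
  fixes n k :: nat
  defines "L \<equiv> log 2 (real n)"
  assumes "n \<ge> 2" "sqrt n < k" "3 * L + 2 \<le> sqrt n"
    and "L * (9 * L + 5 - 2 * sqrt n) \<le> -2 * n powr (1/4)" and "4 * L \<le> d"
  shows "measure_pmf.prob (gnp_half n) {E. planted_clique_recovered n k d E}
           \<ge> 1 - exp (- (n powr (1/4)))"
proof -
  define m where "m = nat \<lceil>3 * L\<rceil>"
  define s where "s = nat \<lfloor>sqrt n\<rfloor>"
  define a where "a = s - m"
  have "L \<ge> 1" using \<open>n \<ge> 2\<close> by (simp add: L_def)
  then have m: "3 * L \<le> m" "m \<le> 3 * L + 1"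
    unfolding m_def by linarith+
  have "real s = \<lfloor>sqrt n\<rfloor>" unfolding s_def by simp
  then have s: "sqrt n - 1 \<le> s" "s \<le> sqrt n"
    using floor_correct[of "sqrt n"] by linarith+
  then have "m \<le> s" using m assms(4) by linarith
  then have "a + m \<le> k" "sqrt n - 3 * L - 2 \<le> a"
    using s m \<open>sqrt n < k\<close> unfolding a_def by linarith+
  have "real m \<le> d" using m \<open>L \<ge> 1\<close> assms(6) by linarith
  then have "{E. \<not> has_biclique n E m a} \<subseteq> {E. planted_clique_recovered n k d E}"
    using \<open>a + m \<le> k\<close> by (auto intro: planted_clique_recovered_if_no_biclique)
  then have "measure_pmf.prob (gnp_half n) {E. \<not> has_biclique n E m a}
      \<le> measure_pmf.prob (gnp_half n) {E. planted_clique_recovered n k d E}"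
    by (rule measure_pmf.finite_measure_mono) simp
  moreover have "measure_pmf.prob (gnp_half n) {E. \<not> has_biclique n E m a}
      = 1 - measure_pmf.prob (gnp_half n) {E. has_biclique n E m a}"
    using measure_pmf.prob_compl[of "{E. has_biclique n E m a}" "gnp_half n"]
    by (simp add: Compl_eq_Diff_UNIV[symmetric] Collect_neg_eq)
  moreover have "real n ^ (m + a) / 2 ^ (a * m) \<le> exp (- (n powr (1/4)))"
    using biclique_union_bound_le_exp \<open>n \<ge> 2\<close> m \<open>sqrt n - 3 * L - 2 \<le> a\<close> assms(5)
    unfolding L_def by blast
  ultimately show ?thesis
    using prob_has_biclique_le[of n m a] by linarith
qed

theorem proposition2p1:
  "\<exists>C0 r :: real. C0 > 0 \<and> r > 0 \<and>
    (\<forall>n k :: nat. real k > sqrt (real n) \<longrightarrow>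
      measure_pmf.prob (gnp_half n)
        {E. \<forall>K. K \<subseteq> {..<n} \<and> card K = k \<longrightarrow>
              (\<forall>K'. is_max_clique n (E \<union> clique_edges K) K' \<longrightarrow>
                  real (card (K' \<inter> K)) \<ge> real k - C0 * log 2 (real n) \<and>
                  real (card (K' - K)) \<le> C0 * log 2 (real n))}
      \<ge> 1 - exp (- (real n powr r)))"
proof -
  have "\<forall>\<^sub>F x in at_top. 3 * log 2 x + 2 \<le> sqrt x" by real_asymp
  moreover have "\<forall>\<^sub>F x in at_top. log 2 x * (9 * log 2 x + 5 - 2 * sqrt x) \<le> -2 * x powr (1/4)"
    by real_asymp
  ultimately have "\<forall>\<^sub>F n in sequentially. 3 * log 2 (real n) + 2 \<le> sqrt n \<and>
      log 2 n * (9 * log 2 n + 5 - 2 * sqrt n) \<le> -2 * n powr (1/4)"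
    by (intro eventually_compose_filterlim[OF _ filterlim_real_sequentially] eventually_conj)
  then obtain N where N: "\<And>n. n \<ge> N \<Longrightarrow> 3 * log 2 (real n) + 2 \<le> sqrt n \<and>
      log 2 n * (9 * log 2 n + 5 - 2 * sqrt n) \<le> -2 * n powr (1/4)"
    unfolding eventually_sequentially by blast
  define C0 where "C0 = max 4 (real N)"
  have "1 - exp (- (n powr (1/4)))
      \<le> measure_pmf.prob (gnp_half n) {E. planted_clique_recovered n k (C0 * log 2 n) E}"
    if "sqrt n < k" for n k :: nat
  proof (cases "n \<ge> 2 \<and> n \<ge> N")
    case True
    then show ?thesis
      using N that by (intro prob_planted_clique_recovered_ge) (auto simp: C0_def)
  next
    case False
    have "n < k \<or> real n \<le> C0 * log 2 n"
    proof (cases "n < 2")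
      case True
      then have "real n \<le> sqrt n" by (auto simp: less_2_cases_iff)
      then show ?thesis using that by linarith
    next
      case False
      then have "real n \<le> C0" "1 \<le> log 2 n" using \<open>\<not> (n \<ge> 2 \<and> n \<ge> N)\<close> by (auto simp: C0_def)
      moreover have "C0 * 1 \<le> C0 * log 2 n"
        using \<open>1 \<le> log 2 n\<close> by (intro mult_left_mono) (auto simp: C0_def)
      ultimately show ?thesis by linarith
    qed
    then show ?thesis by (simp add: planted_clique_recovered_trivial)
  qed
  then show ?thesis
    unfolding planted_clique_recovered_def by (intro exI[of _ C0] exI[of _ "1/4"]) (auto simp: C0_def)
qed

end
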